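(* Let $(\lambda,\nu,s)$ be a co-Pieri triple and let $n$ be sufficiently large compared with $r=|\lambda|+s$. For every partition $\alpha\vdash n-s$ with $\alpha\subseteq\lambda_{[n]}\cap\nu_{[n]}$, every element of $\mathrm{Std}_s(\nu_{[n]}\setminus\alpha)$ has the form $\mathsf p=(-\varepsilon_0,+\varepsilon_{j_1},\dots,-\varepsilon_0,+\varepsilon_{j_s})$ and every element of $\mathrm{Std}_s(\alpha\setminus\lambda_{[n]})$ has the form $\mathsf q=(-\varepsilon_{i_1},+\varepsilon_0,\dots,-\varepsilon_{i_s},+\varepsilon_0)$, with all $i_l,j_l\ge1$, and the rule $$\varphi_s(\mathsf p,\mathsf q)=(-\varepsilon_{i_1-1},+\varepsilon_{j_1-1},-\varepsilon_{i_2-1},+\varepsilon_{j_2-1},\dots,-\varepsilon_{i_s-1},+\varepsilon_{j_s-1})$$ defines a bijection $$\varphi_s:\bigsqcup_{\substack{\alpha\vdash n-s\\ \alpha\subseteq\lambda_{[n]}\cap\nu_{[n]}}}\mathrm{Std}_s(\nu_{[n]}\setminus\alpha)\times\mathrm{Std}_s(\alpha\setminus\lambda_{[n]})\longrightarrow\mathrm{Std}^+_s(\nu\setminus\lambda).$$ Moreover, for every $\mathsf u=\varphi_s(\mathsf p,\mathsf q)\in\mathrm{Std}^+_s(\nu\setminus\lambda)$ and every $1\le k\le s-1$, the tableaux $\mathsf p_{k\leftrightarrow k+1},\mathsf q_{k\leftrightarrow k+1}$ exist and $\varphi_s(\mathsf p_{k\leftrightarrow k+1},\mathsf q_{k\leftrightarrow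 k+1})=\mathsf u_{k\leftrightarrow k+1}\in\mathrm{Std}^+_s(\nu\setminus\lambda)$; hence $\mathsf u_{k\leftrightarrow k+1}$ exists for every $\mathsf u\in\mathrm{Std}^0_s(\nu\setminus\lambda)$ and every $1\le k\le s-1$.
   Context: For a partition $\lambda$: $|\lambda|$ size, $\ell(\lambda)$ number of nonzero parts; $\lambda_{[n]}=(n-|\lambda|,\lambda_1,\lambda_2,\dots)$. $\lambda\cap\nu$ is the componentwise minimum; for $\alpha\subseteq\beta$, $\beta\ominus\alpha$ is the difference of Young diagrams. $\pm\varepsilon_i$ ($i\ge1$) adds/removes a box in row $i$, $\varepsilon_0=0$. For partitions $\lambda,\nu$ and $s\ge0$ with $|\nu|\le|\lambda|+s$, $\mathrm{Std}_s(\nu\setminus\lambda)$ is the set of sequences $\mathsf t=(-\varepsilon_{i_1},+\varepsilon_{j_1},\dots,-\varepsilon_{i_s},+\varepsilon_{j_s})$, $i_k,j_k\ge0$, such that with $\mathsf t(0)=\lambda$, $\mathsf t(k-\frac12)=\mathsf t(k-1)-\varepsilon_{i_k}$, $\mathsf t(k)=\mathsf t(k-\frac12)+\varepsilon_{j_k}$ all are partitions and $\mathsf t(s)=\nu$; $(-\varepsilon_{i_k},+\varepsilon_{j_k})$ is the $k$-th integral step. $\mathrm{Std}^+_s(\nu\setminus\lambda)$ is the subset with $\#\{k:i_k=i\}\le\lambda_i$ for all $i\ge1$; $\mathrm{Std}^0_s(\nu\setminus\lambda)$ is the subset of $\mathrm{Std}^+_s(\nu\setminus\lambda)$ of those with no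 integral step $(-\varepsilon_0,+\varepsilon_0)$. $\mathsf t_{k\leftrightarrow k+1}$ is obtained by interchanging the $k$-th and $(k+1)$-th integral steps; it exists if it again lies in $\mathrm{Std}_s$ of the same shape. A co-Pieri triple is $(\lambda,\nu,s)$ with $|\nu|\le|\lambda|+s$, $\mathrm{Std}^0_s(\nu\setminus\lambda)\ne\emptyset$ and: $s=1$, or $s>1$ and, if $\max\{\ell(\lambda),\ell(\nu)\}\ge2$, $s\le\max\{|\lambda\ominus(\lambda\cap\nu)|,|\nu\ominus(\lambda\cap\nu)|\}+\min_{2\le i\le\max\{\ell(\lambda),\ell(\nu)\}}(\min\{\lambda_{i-1},\nu_{i-1}\}-\max\{\lambda_i,\nu_i\})$. *)

theory Defs
  imports Main
begin

text \<open>A partition is encoded as a function nat => nat: the value at i >= 1 is the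
  i-th row length; the value at 0 is required to be 0 (so the encoding is unique).\<close>
type_synonym partition = "nat \<Rightarrow> nat"

definition is_partition :: "partition \<Rightarrow> bool" where
  "is_partition la \<longleftrightarrow> la 0 = 0 \<and> (\<forall>i\<ge>1. la (Suc i) \<le> la i) \<and> finite {i. la i \<noteq> 0}"

definition psize :: "partition \<Rightarrow> nat" where
  "psize la = (\<Sum>i\<in>{i. la i \<noteq> 0}. la i)"

definition plength :: "partition \<Rightarrow> nat" where
  "plength la = card {i. 1 \<le> i \<and> la i \<noteq> 0}"

definition shift_part :: "nat \<Rightarrow> partition \<Rightarrow> partition" where
  "shift_part n la = (\<lambda>i. if i = 0 then 0 else if i = 1 then n - psize la else la (i - 1))"

definition pinter :: "partition \<Rightarrow> partition \<Rightarrow> partition" where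
  "pinter la nu = (\<lambda>i. min (la i) (nu i))"

definition psubseteq :: "partition \<Rightarrow> partition \<Rightarrow> bool" where
  "psubseteq al be \<longleftrightarrow> (\<forall>i. al i \<le> be i)"

definition skew_size :: "partition \<Rightarrow> partition \<Rightarrow> nat" where
  "skew_size be al = psize be - psize al"

text \<open>- eps_i and + eps_i (eps_0 = 0)\<close>
definition rem_box :: "partition \<Rightarrow> nat \<Rightarrow> partition" where
  "rem_box la i = (if i = 0 then la else la(i := la i - 1))"

definition add_box :: "partition \<Rightarrow> nat \<Rightarrow> partition" where
  "add_box la i = (if i = 0 then la else la(i := Suc (la i)))"

text \<open>A sequence of integral steps is a list of pairs (i_k, j_k), meaning
  (-eps_{i_k}, +eps_{j_k}). valid_walk la t nu: starting from la, all intermediate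
  shapes are partitions (removals are genuine removals) and the walk ends at nu.\<close>
fun valid_walk :: "partition \<Rightarrow> (nat \<times> nat) list \<Rightarrow> partition \<Rightarrow> bool" where
  "valid_walk la [] nu \<longleftrightarrow> la = nu"
| "valid_walk la ((i, j) # t) nu \<longleftrightarrow>
     (i = 0 \<or> 0 < la i) \<and> is_partition (rem_box la i) \<and>
     is_partition (add_box (rem_box la i) j) \<and>
     valid_walk (add_box (rem_box la i) j) t nu"

definition Std :: "nat \<Rightarrow> partition \<Rightarrow> partition \<Rightarrow> (nat \<times> nat) list set" where
  "Std s la nu = {t. length t = s \<and> is_partition la \<and> valid_walk la t nu}"

definition StdPlus :: "nat \<Rightarrow> partition \<Rightarrow> partition \<Rightarrow> (nat \<times> nat) list set" where
  "StdPlus s la nu = {t \<in> Std s la nu. \<forall>i\<ge>1. length (filter (\<lambda>st. fst st = i) t) \<le> la i}"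

definition StdZero :: "nat \<Rightarrow> partition \<Rightarrow> partition \<Rightarrow> (nat \<times> nat) list set" where
  "StdZero s la nu = {t \<in> StdPlus s la nu. (0, 0) \<notin> set t}"

text \<open>t_{k<->k+1}: interchange the k-th and (k+1)-th integral steps (1-indexed)\<close>
definition swap_steps :: "nat \<Rightarrow> (nat \<times> nat) list \<Rightarrow> (nat \<times> nat) list" where
  "swap_steps k t = t[k - 1 := t ! k, k := t ! (k - 1)]"

definition co_Pieri :: "partition \<Rightarrow> partition \<Rightarrow> nat \<Rightarrow> bool" where
  "co_Pieri la nu s \<longleftrightarrow>
     is_partition la \<and> is_partition nu \<and> psize nu \<le> psize la + s \<and>
     StdZero s la nu \<noteq> {} \<and>
     (s = 1 \<or>
      (s > 1 \<and>
        (max (plength la) (plength nu) \<ge> 2 \<longrightarrow>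
          int s \<le> int (max (skew_size la (pinter la nu)) (skew_size nu (pinter la nu)))
                 + Min ((\<lambda>i. int (min (la (i - 1)) (nu (i - 1))) - int (max (la i) (nu i)))
                        ` {2..max (plength la) (plength nu)}))))"

definition phi :: "(nat \<times> nat) list \<Rightarrow> (nat \<times> nat) list \<Rightarrow> (nat \<times> nat) list" where
  "phi p q = map (\<lambda>(pp, qq). (fst qq - 1, snd pp - 1)) (zip p q)"

end

theory Submission
  imports Defs "HOL-Library.Multiset"
begin

text \<open>For large \<open>n\<close>, sizes alone force the shape of the walks: \<open>p\<close> goes from \<open>al\<close>, of size
  \<open>n - s\<close>, to \<open>nu_n\<close>, of size \<open>n\<close>, in \<open>s\<close> steps, so it only adds boxes, and dually \<open>q\<close>
  only removes boxes. Taking the removals from \<open>q\<close> and the additions from \<open>p\<close> gives a walk from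
  \<open>la_n\<close> to \<open>nu_n\<close> that never uses the dummy index 0; deleting the first row turns it into
  \<open>phi p q\<close>, and lifting the steps of \<open>u\<close> one row down inverts \<open>phi\<close>.

  Validity of all these walks, and of the interchanged ones, only depends on how many boxes each
  row gains and loses: if every shape with \<open>lo \<le> x \<le> hi\<close> is a partition, which holds as soon as
  \<open>hi (r + 1) \<le> lo r\<close>, then a step sequence whose row counts keep all rows between \<open>lo\<close> and \<open>hi\<close>
  is a valid walk. For \<open>lo = al\<close> and \<open>hi = la_n + nu_n - al\<close> this box condition is the
  co-Pieri inequality in rows \<open>\<ge> 2\<close> and the size of \<open>n\<close> in row 1. For \<open>s = 1\<close> there is nothing to
  interchange and the walks are single steps.\<close>


section \<open>Counting the steps of a walk\<close>

definition rem_count :: "(nat \<times> nat) list \<Rightarrow> nat \<Rightarrow> nat" where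
  "rem_count t r = length (filter (\<lambda>st. fst st = r) t)"

definition add_count :: "(nat \<times> nat) list \<Rightarrow> nat \<Rightarrow> nat" where
  "add_count t r = length (filter (\<lambda>st. snd st = r) t)"

lemma rem_count_simps [simp]:
  "rem_count [] r = 0"
  "rem_count (st # t) r = (if fst st = r then Suc (rem_count t r) else rem_count t r)"
  by (auto simp: rem_count_def)

lemma add_count_simps [simp]:
  "add_count [] r = 0"
  "add_count (st # t) r = (if snd st = r then Suc (add_count t r) else add_count t r)"
  by (auto simp: add_count_def)

lemma rem_count_le_length: "rem_count t r \<le> length t"
  by (simp add: rem_count_def)

lemma add_count_le_length: "add_count t r \<le> length t"
  by (simp add: add_count_def)

lemma rem_count_eq_length_iff: "rem_count t r = length t \<longleftrightarrow> (\<forall>st\<in>set t. fst st = r)"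
proof
  assume "rem_count t r = length t"
  then show "\<forall>st\<in>set t. fst st = r"
    unfolding rem_count_def using length_filter_less[of _ t "\<lambda>st. fst st = r"] by fastforce
qed (simp add: rem_count_def)

lemma add_count_eq_length_iff: "add_count t r = length t \<longleftrightarrow> (\<forall>st\<in>set t. snd st = r)"
proof
  assume "add_count t r = length t"
  then show "\<forall>st\<in>set t. snd st = r"
    unfolding add_count_def using length_filter_less[of _ t "\<lambda>st. snd st = r"] by fastforce
qed (simp add: add_count_def)

lemma rem_count_eq_0_iff: "rem_count t r = 0 \<longleftrightarrow> (\<forall>st\<in>set t. fst st \<noteq> r)"
  by (simp add: rem_count_def filter_empty_conv)

lemma add_count_eq_0_iff: "add_count t r = 0 \<longleftrightarrow> (\<forall>st\<in>set t. snd st \<noteq> r)"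
  by (simp add: add_count_def filter_empty_conv)

lemma sum_length_filter_eq_le_length:
  "finite S \<Longrightarrow> (\<Sum>r\<in>S. length (filter (\<lambda>x. f x = r) xs)) \<le> length xs"
proof (induction xs)
  case (Cons x xs)
  have "(\<Sum>r\<in>S. length (filter (\<lambda>x. f x = r) (x # xs)))
      = (\<Sum>r\<in>S. length (filter (\<lambda>x. f x = r) xs)) + (\<Sum>r\<in>S. if f x = r then 1 else 0)"
    by (subst sum.distrib[symmetric]) (rule sum.cong, auto)
  also have "(\<Sum>r\<in>S. if f x = r then 1 else 0) \<le> (1::nat)"
    using Cons.prems by (simp add: sum.delta)
  finally show ?case using Cons by simp
qed simp

lemma mset_swap_steps: "1 \<le> k \<Longrightarrow> k < length t \<Longrightarrow> mset (swap_steps k t) = mset t"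
  unfolding swap_steps_def by (rule mset_swap) auto

lemma counts_swap_steps:
  assumes "1 \<le> k" "k < length t"
  shows "rem_count (swap_steps k t) r = rem_count t r"
    "add_count (swap_steps k t) r = add_count t r"
proof -
  have "length (filter P (swap_steps k t)) = length (filter P t)" for P
    using mset_swap_steps[OF assms] by (metis mset_filter size_mset)
  then show "rem_count (swap_steps k t) r = rem_count t r"
    "add_count (swap_steps k t) r = add_count t r"
    unfolding rem_count_def add_count_def by blast+
qed

lemma rem_box_apply: "rem_box mu i r = (if i \<noteq> 0 \<and> r = i then mu r - 1 else mu r)"
  by (auto simp: rem_box_def)

lemma add_box_apply: "add_box mu j r = (if j \<noteq> 0 \<and> r = j then Suc (mu r) else mu r)"
  by (auto simp: add_box_def)

lemma rem_box_0 [simp]: "rem_box mu 0 = mu"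
  by (simp add: rem_box_def)

lemma add_box_0 [simp]: "add_box mu 0 = mu"
  by (simp add: add_box_def)

lemma valid_walk_row_balance:
  "valid_walk mu t E \<Longrightarrow> r \<noteq> 0 \<Longrightarrow> mu r + add_count t r = E r + rem_count t r"
proof (induction t arbitrary: mu)
  case (Cons st t)
  obtain i j where st: "st = (i, j)" by fastforce
  have pos: "i = 0 \<or> 0 < mu i" and walk: "valid_walk (add_box (rem_box mu i) j) t E"
    using Cons.prems(1) unfolding st by simp_all
  have "add_box (rem_box mu i) j r + add_count t r = E r + rem_count t r"
    using Cons.IH[OF walk Cons.prems(2)] .
  moreover have
    "add_box (rem_box mu i) j r = mu r - (if i = r then 1 else 0) + (if j = r then 1 else 0)"
    using Cons.prems(2) by (simp add: rem_box_apply add_box_apply)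
  ultimately show ?case
    using pos Cons.prems(2) unfolding st by (cases "i = r"; cases "j = r") simp_all
qed simp

lemma valid_walk_target_is_partition: "valid_walk mu t E \<Longrightarrow> t \<noteq> [] \<Longrightarrow> is_partition E"
proof (induction t arbitrary: mu)
  case (Cons st t)
  then show ?case by (cases st; cases t) auto
qed simp

lemma valid_walk_merge_single:
  "valid_walk al [(0, j)] E \<Longrightarrow> valid_walk mu [(i, 0)] al \<Longrightarrow> valid_walk mu [(i, j)] E"
  by auto

lemma valid_walk_unique: "valid_walk mu t E \<Longrightarrow> valid_walk mu t E' \<Longrightarrow> E = E'"
  by (induction t arbitrary: mu) auto

section \<open>Sizes of shapes\<close>

lemma psize_eq_sum: "finite T \<Longrightarrow> {k. f k \<noteq> 0} \<subseteq> T \<Longrightarrow> psize f = sum f T"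
  unfolding psize_def by (rule sum.mono_neutral_left) auto

lemma psize_fun_upd:
  assumes "finite {k. mu k \<noteq> 0}"
  shows "psize (mu(i := v)) + mu i = psize mu + v"
proof -
  let ?T = "insert i {k. mu k \<noteq> 0}"
  have fin: "finite ?T" using assms by simp
  have "psize mu = sum mu ?T" by (rule psize_eq_sum[OF fin]) auto
  also have "\<dots> = mu i + sum mu (?T - {i})" using fin by (rule sum.remove) simp
  finally have old: "psize mu = mu i + sum mu (?T - {i})" .
  have "psize (mu(i := v)) = sum (mu(i := v)) ?T" by (rule psize_eq_sum[OF fin]) auto
  also have "\<dots> = v + sum (mu(i := v)) (?T - {i})"
    using sum.remove[OF fin, of i "mu(i := v)"] by simp
  also have "sum (mu(i := v)) (?T - {i}) = sum mu (?T - {i})" by (rule sum.cong) auto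
  finally show ?thesis using old by linarith
qed

lemma psize_rem_box:
  "finite {k. mu k \<noteq> 0} \<Longrightarrow> i = 0 \<or> 0 < mu i \<Longrightarrow>
   psize (rem_box mu i) + (if i = 0 then 0 else 1) = psize mu"
  using psize_fun_upd[of mu i "mu i - 1"] by (auto simp: rem_box_def)

lemma psize_add_box:
  "finite {k. mu k \<noteq> 0} \<Longrightarrow> psize (add_box mu j) = psize mu + (if j = 0 then 0 else 1)"
  using psize_fun_upd[of mu j "Suc (mu j)"] by (simp add: add_box_def)

lemma finite_support: "is_partition mu \<Longrightarrow> finite {k. mu k \<noteq> 0}"
  by (simp add: is_partition_def)

lemma valid_walk_psize:
  "is_partition mu \<Longrightarrow> valid_walk mu t E \<Longrightarrow> psize E + add_count t 0 = psize mu + rem_count t 0"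
proof (induction t arbitrary: mu)
  case (Cons st t)
  obtain i j where st: "st = (i, j)" by fastforce
  have pos: "i = 0 \<or> 0 < mu i" and part: "is_partition (rem_box mu i)"
    and walk: "valid_walk (add_box (rem_box mu i) j) t E"
    using Cons.prems(2) unfolding st by simp_all
  have "psize (add_box (rem_box mu i) j) + (if i = 0 then 0 else 1)
      = psize mu + (if j = 0 then 0 else 1)"
    using psize_rem_box[OF finite_support[OF Cons.prems(1)] pos]
      psize_add_box[OF finite_support[OF part], of j] by simp
  moreover have "is_partition (add_box (rem_box mu i) j)"
    using Cons.prems(2) unfolding st by simp
  ultimately show ?case
    using Cons.IH[OF _ walk] unfolding st by (cases "i = 0"; cases "j = 0") auto
qed simp

lemma psize_diff:
  assumes "\<forall>r. f r \<le> g r" "finite T" "{r. g r \<noteq> 0} \<subseteq> T"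
  shows "int (psize g) - int (psize f) = (\<Sum>r\<in>T. int (g r) - int (f r))"
proof -
  have "{r. f r \<noteq> 0} \<subseteq> T"
    using assms(1,3) by (metis (mono_tags, lifting) Collect_mono_iff le_zero_eq subset_iff)
  then have "psize f = sum f T" by (rule psize_eq_sum[OF assms(2)])
  moreover have "psize g = sum g T" by (rule psize_eq_sum[OF assms(2,3)])
  ultimately show ?thesis by (simp add: sum_subtractf)
qed

lemma psize_mono:
  assumes "\<forall>r. f r \<le> g r" "finite {r. g r \<noteq> 0}"
  shows "psize f \<le> psize g"
proof -
  have "int (psize g) - int (psize f) = (\<Sum>r\<in>{r. g r \<noteq> 0}. int (g r) - int (f r))"
    by (rule psize_diff[OF assms(1,2)]) simp
  also have "\<dots> \<ge> 0" using assms(1) by (intro sum_nonneg) auto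
  finally show ?thesis by simp
qed

lemma psize_diff_ge_two_rows:
  assumes "\<forall>r. f r \<le> g r" "finite {r. g r \<noteq> 0}" "i \<noteq> i'"
  shows "(int (g i) - int (f i)) + (int (g i') - int (f i')) \<le> int (psize g) - int (psize f)"
proof -
  let ?T = "{r. g r \<noteq> 0} \<union> {i, i'}"
  have fin: "finite ?T" using assms(2) by simp
  have "(\<Sum>r\<in>{i, i'}. int (g r) - int (f r)) \<le> (\<Sum>r\<in>?T. int (g r) - int (f r))"
    by (rule sum_mono2[OF fin]) (use assms(1) in auto)
  also have "\<dots> = int (psize g) - int (psize f)"
    by (rule psize_diff[OF assms(1) fin, symmetric]) auto
  finally show ?thesis using assms(3) by simp
qed

lemma psize_le_psize_add_sum:
  assumes "\<forall>r. f r \<le> g r" "finite {r. g r \<noteq> 0}" "\<forall>r. g r \<le> f r + c r"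
  shows "psize g \<le> psize f + sum c {r. g r \<noteq> 0}"
proof -
  have "int (psize g) - int (psize f) = (\<Sum>r | g r \<noteq> 0. int (g r) - int (f r))"
    by (rule psize_diff[OF assms(1,2)]) simp
  also have "\<dots> \<le> (\<Sum>r | g r \<noteq> 0. int (c r))"
  proof (rule sum_mono)
    fix r
    show "int (g r) - int (f r) \<le> int (c r)" using assms(3)[rule_format, of r] by linarith
  qed
  also have "\<dots> = int (sum c {r. g r \<noteq> 0})" by simp
  finally show ?thesis by linarith
qed

section \<open>Walks confined to a box\<close>

lemma is_partition_between:
  assumes "\<forall>r\<ge>1. hi (Suc r) \<le> lo r" "finite {r. hi r \<noteq> 0}" "x 0 = 0"
    "\<forall>r\<ge>1. lo r \<le> x r \<and> x r \<le> hi r"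
  shows "is_partition x"
  unfolding is_partition_def
proof (intro conjI allI impI)
  fix i :: nat assume "1 \<le> i"
  then show "x (Suc i) \<le> x i" using assms(1,4) by (meson le_SucI order_trans)
next
  have "{r. x r \<noteq> 0} \<subseteq> {r. hi r \<noteq> 0}"
    using assms(3,4) by (auto simp: Suc_le_eq) (metis le_zero_eq neq0_conv)
  then show "finite {r. x r \<noteq> 0}" using assms(2) finite_subset by blast
qed fact

lemma valid_walk_between:
  assumes box: "\<forall>r\<ge>1. hi (Suc r) \<le> lo r" "finite {r. hi r \<noteq> 0}"
  shows "mu 0 = 0 \<Longrightarrow> E 0 = 0 \<Longrightarrow>
    \<forall>r\<ge>1. lo r + rem_count t r \<le> mu r \<and> mu r + add_count t r \<le> hi r \<and>
      mu r + add_count t r = E r + rem_count t r \<Longrightarrow>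
    valid_walk mu t E"
proof (induction t arbitrary: mu)
  case Nil
  have "mu r = E r" for r using Nil by (cases "r = 0") auto
  then show ?case by auto
next
  case (Cons st t)
  obtain i j where st: "st = (i, j)" by fastforce
  let ?x = "rem_box mu i"
  let ?y = "add_box ?x j"
  have H: "lo r + rem_count (st # t) r \<le> mu r \<and> mu r + add_count (st # t) r \<le> hi r \<and>
      mu r + add_count (st # t) r = E r + rem_count (st # t) r" if "r \<ge> 1" for r
    using Cons.prems(3) that by blast
  have pos: "i = 0 \<or> 0 < mu i"
    using H[of i] st by (cases "i = 0") auto
  have x: "lo r + rem_count t r \<le> ?x r \<and> ?x r + add_count (st # t) r \<le> hi r" if "r \<ge> 1" for r
    using H[OF that] st that by (auto simp: rem_box_apply)
  have y: "lo r + rem_count t r \<le> ?y r \<and> ?y r + add_count t r \<le> hi r \<and>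
      ?y r + add_count t r = E r + rem_count t r" if "r \<ge> 1" for r
    using H[OF that] st that
    by (cases "i = r"; cases "j = r") (auto simp: rem_box_apply add_box_apply)
  have "is_partition ?x"
  proof (rule is_partition_between[OF box])
    show "?x 0 = 0" using Cons.prems(1) by (simp add: rem_box_apply)
    show "\<forall>r\<ge>1. lo r \<le> ?x r \<and> ?x r \<le> hi r" using x by (meson add_leD1 add_leE)
  qed
  moreover have "?y 0 = 0" using Cons.prems(1) by (auto simp: rem_box_apply add_box_apply)
  moreover have "is_partition ?y"
  proof (rule is_partition_between[OF box])
    show "?y 0 = 0" by fact
    show "\<forall>r\<ge>1. lo r \<le> ?y r \<and> ?y r \<le> hi r" using y by (meson add_leD1 add_leE)
  qed
  moreover have "valid_walk ?y t E"
    using Cons.IH[of ?y] calculation(2) Cons.prems(2) y by blast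
  ultimately show ?case using pos st by simp
qed

section \<open>Deleting the first row\<close>

definition tail_part :: "partition \<Rightarrow> partition" where
  "tail_part f = (\<lambda>i. if i = 0 then 0 else f (Suc i))"

lemma tail_part_rem_box: "tail_part (rem_box mu (Suc i)) = rem_box (tail_part mu) i"
  by (rule ext) (auto simp: tail_part_def rem_box_apply)

lemma tail_part_add_box: "tail_part (add_box mu (Suc i)) = add_box (tail_part mu) i"
  by (rule ext) (auto simp: tail_part_def add_box_apply)

lemma shift_part_rows:
  "shift_part n mu 0 = 0" "shift_part n mu 1 = n - psize mu"
  "r \<noteq> 0 \<Longrightarrow> shift_part n mu (Suc r) = mu r"
  by (simp_all add: shift_part_def)

lemma tail_part_shift_part: "mu 0 = 0 \<Longrightarrow> tail_part (shift_part n mu) = mu"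
  by (rule ext) (auto simp: tail_part_def shift_part_def)

lemma support_tail_part: "{i. tail_part f i \<noteq> 0} = {i. i \<noteq> 0 \<and> f (Suc i) \<noteq> 0}"
  by (auto simp: tail_part_def)

lemma support_subset_tail_part:
  assumes "f 0 = 0"
  shows "{i. f i \<noteq> 0} \<subseteq> insert 1 (Suc ` {i. tail_part f i \<noteq> 0})"
proof
  fix i assume i: "i \<in> {i. f i \<noteq> 0}"
  then obtain k where "i = Suc k" using assms by (cases i) auto
  with i show "i \<in> insert 1 (Suc ` {i. tail_part f i \<noteq> 0})"
    by (cases "k = 0") (auto simp: tail_part_def)
qed

lemma is_partition_tail_part: "is_partition mu \<Longrightarrow> is_partition (tail_part mu)"
  unfolding is_partition_def support_tail_part
proof (intro conjI allI impI)
  assume p: "mu 0 = 0 \<and> (\<forall>i\<ge>1. mu (Suc i) \<le> mu i) \<and> finite {i. mu i \<noteq> 0}"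
  show "tail_part mu 0 = 0" by (simp add: tail_part_def)
  show "tail_part mu (Suc i) \<le> tail_part mu i" if "1 \<le> i" for i
    using p that by (auto simp: tail_part_def)
  have "{i. i \<noteq> 0 \<and> mu (Suc i) \<noteq> 0} \<subseteq> (\<lambda>k. k - 1) ` {i. mu i \<noteq> 0}"
    by (auto intro: image_eqI[of _ _ "Suc _"])
  then show "finite {i. i \<noteq> 0 \<and> mu (Suc i) \<noteq> 0}" using p finite_subset by blast
qed

lemma is_partition_if_tail_part:
  assumes "mu 0 = 0" "mu 2 \<le> mu 1" "is_partition (tail_part mu)"
  shows "is_partition mu"
  unfolding is_partition_def
proof (intro conjI allI impI)
  show "mu (Suc i) \<le> mu i" if "1 \<le> i" for i
  proof (cases "i = 1")
    case True
    then show ?thesis using assms(2) by (simp add: numeral_2_eq_2)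
  next
    case False
    then have "1 \<le> i - 1" using that by simp
    then have "tail_part mu (Suc (i - 1)) \<le> tail_part mu (i - 1)"
      using assms(3) unfolding is_partition_def by blast
    then show ?thesis using False that by (simp add: tail_part_def)
  qed
  have "finite {i. tail_part mu i \<noteq> 0}" using assms(3) by (rule finite_support)
  then show "finite {i. mu i \<noteq> 0}"
    using support_subset_tail_part[of mu, OF assms(1)] finite_subset by blast
qed fact

lemma psize_tail_part:
  assumes "f 0 = 0" "finite {k. f k \<noteq> 0}"
  shows "psize f = f 1 + psize (tail_part f)"
proof -
  let ?U = "{k. tail_part f k \<noteq> 0}"
  have "?U \<subseteq> (\<lambda>k. k - 1) ` {k. f k \<noteq> 0}"
    unfolding support_tail_part by (auto intro: image_eqI[of _ _ "Suc _"])
  then have finU: "finite ?U" using assms(2) finite_subset by blast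
  have "psize (tail_part f) = sum (\<lambda>k. f (Suc k)) ?U"
    unfolding psize_def by (rule sum.cong) (auto simp: tail_part_def)
  also have "\<dots> = sum f (Suc ` ?U)" by (simp add: sum.reindex)
  finally have tail: "psize (tail_part f) = sum f (Suc ` ?U)" .
  have "psize f = sum f (insert 1 (Suc ` ?U))"
    by (rule psize_eq_sum) (use finU support_subset_tail_part[of f, OF assms(1)] in auto)
  also have "\<dots> = f 1 + sum f (Suc ` ?U)"
    using finU by (subst sum.insert) (auto simp: tail_part_def)
  finally show ?thesis using tail by simp
qed

lemma
  assumes "is_partition mu" "mu 1 + psize mu \<le> n"
  shows is_partition_shift_part: "is_partition (shift_part n mu)"
    and psize_shift_part: "psize (shift_part n mu) = n"
proof -
  have mu0: "mu 0 = 0" using assms(1) by (simp add: is_partition_def)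
  show part: "is_partition (shift_part n mu)"
    by (rule is_partition_if_tail_part)
      (use assms mu0 tail_part_shift_part[of mu n, OF mu0] in \<open>auto simp: shift_part_def\<close>)
  have "psize (shift_part n mu) = shift_part n mu 1 + psize (tail_part (shift_part n mu))"
    by (rule psize_tail_part) (use part in \<open>auto simp: is_partition_def\<close>)
  then show "psize (shift_part n mu) = n"
    using assms tail_part_shift_part[of mu n, OF mu0] by (simp add: shift_part_def)
qed

lemma valid_walk_tail_part:
  "valid_walk mu w E \<Longrightarrow> \<forall>st\<in>set w. fst st \<noteq> 0 \<and> snd st \<noteq> 0 \<Longrightarrow>
   valid_walk (tail_part mu) (map (\<lambda>(i, j). (i - 1, j - 1)) w) (tail_part E)"
proof (induction w arbitrary: mu)
  case (Cons st w)
  obtain i j where st: "st = (Suc i, Suc j)"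
    using Cons.prems(2) by (metis list.set_intros(1) not0_implies_Suc prod.collapse)
  let ?x = "rem_box mu (Suc i)"
  let ?y = "add_box ?x (Suc j)"
  have step: "0 < mu (Suc i)" "is_partition ?x" "is_partition ?y" "valid_walk ?y w E"
    using Cons.prems(1) st by simp_all
  have "tail_part ?y = add_box (rem_box (tail_part mu) i) j"
    by (simp add: tail_part_add_box tail_part_rem_box)
  moreover have "i = 0 \<or> 0 < tail_part mu i" using step(1) by (auto simp: tail_part_def)
  moreover have "is_partition (rem_box (tail_part mu) i)"
    using is_partition_tail_part[OF step(2)] by (simp add: tail_part_rem_box)
  moreover note is_partition_tail_part[OF step(3)]
    Cons.IH[OF step(4)] Cons.prems(2)
  ultimately show ?case using st by simp
qed simp

section \<open>The co-Pieri inequality\<close>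

lemma is_partition_antimono:
  assumes "is_partition mu" "1 \<le> j"
  shows "j \<le> m \<Longrightarrow> mu m \<le> mu j"
proof (induction m rule: dec_induct)
  case (step k)
  then have "mu (Suc k) \<le> mu k" using assms unfolding is_partition_def by auto
  then show ?case using step by simp
qed simp

lemma le_plength:
  assumes "is_partition mu" "1 \<le> k" "mu k \<noteq> 0"
  shows "k \<le> plength mu"
proof -
  have "{1..k} \<subseteq> {i. 1 \<le> i \<and> mu i \<noteq> 0}"
    using is_partition_antimono[OF assms(1)] assms(3) by fastforce
  moreover have "finite {i. 1 \<le> i \<and> mu i \<noteq> 0}"
    using finite_support[OF assms(1)]
    by (simp add: finite_subset[of _ "{i. mu i \<noteq> 0}"] Collect_mono)
  ultimately have "card {1..k} \<le> plength mu" unfolding plength_def by (rule card_mono[rotated])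
  then show ?thesis by simp
qed

text \<open>Since \<open>|la|, |nu| \<le> |be| + s\<close>, the co-Pieri bound, with its minimum taken at \<open>i + 1\<close>,
  leaves at most \<open>min (la i) (nu i) - max (la (i + 1)) (nu (i + 1))\<close> boxes of \<open>la \<inter> nu\<close> in rows
  \<open>i\<close> and \<open>i + 1\<close> outside \<open>be\<close>.\<close>
lemma co_Pieri_rows_bound:
  assumes cp: "co_Pieri la nu s" and s1: "s \<noteq> 1"
    and bl: "\<forall>r. be r \<le> la r" and bn: "\<forall>r. be r \<le> nu r"
    and sl: "psize la \<le> psize be + s" and sn: "psize nu \<le> psize be + s"
    and i: "1 \<le> i"
  shows "la (Suc i) + nu (Suc i) \<le> be i + be (Suc i)"
proof -
  have pl: "is_partition la" and pn: "is_partition nu"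
    using cp unfolding co_Pieri_def by simp_all
  let ?L = "max (plength la) (plength nu)"
  show ?thesis
  proof (cases "Suc i \<le> ?L")
    case False
    then have "la (Suc i) = 0" "nu (Suc i) = 0"
      using le_plength[OF pl, of "Suc i"] le_plength[OF pn, of "Suc i"] by fastforce+
    then show ?thesis by simp
  next
    case True
    let ?m = "pinter la nu"
    let ?f = "\<lambda>i. int (min (la (i - 1)) (nu (i - 1))) - int (max (la i) (nu i))"
    have "int s \<le> int (max (skew_size la ?m) (skew_size nu ?m)) + Min (?f ` {2..?L})"
      using cp s1 True i unfolding co_Pieri_def by auto
    moreover have "Min (?f ` {2..?L}) \<le> ?f (Suc i)"
      by (rule Min_le, simp, rule image_eqI[of _ _ "Suc i"]) (use True i in auto)
    ultimately have bound: "int s \<le> int (max (skew_size la ?m) (skew_size nu ?m)) + ?f (Suc i)"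
      by linarith
    have finl: "finite {r. la r \<noteq> 0}" and finn: "finite {r. nu r \<noteq> 0}"
      using finite_support[OF pl] finite_support[OF pn] .
    have finm: "finite {r. ?m r \<noteq> 0}"
      by (rule finite_subset[OF _ finl]) (auto simp: pinter_def)
    have "psize ?m \<le> psize la" "psize ?m \<le> psize nu"
      by (auto intro!: psize_mono finl finn simp: pinter_def)
    then have "int (max (skew_size la ?m) (skew_size nu ?m)) + (int (psize ?m) - int (psize be))
        \<le> int s"
      using sl sn by (simp add: skew_size_def)
    moreover have "(int (?m i) - int (be i)) + (int (?m (Suc i)) - int (be (Suc i)))
        \<le> int (psize ?m) - int (psize be)"
      using bl bn finm by (intro psize_diff_ge_two_rows) (auto simp: pinter_def)
    ultimately show ?thesis
      using bound by (simp add: pinter_def min_def max_def split: if_splits)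
  qed
qed

section \<open>Merging and lifting step sequences\<close>

definition merge_steps :: "(nat \<times> nat) list \<Rightarrow> (nat \<times> nat) list \<Rightarrow> (nat \<times> nat) list" where
  "merge_steps p q = map (\<lambda>(a, b). (fst b, snd a)) (zip p q)"

lemma rem_count_merge_steps: "length p = length q \<Longrightarrow> rem_count (merge_steps p q) r = rem_count q r"
  unfolding merge_steps_def by (induction p q rule: list_induct2) auto

lemma add_count_merge_steps: "length p = length q \<Longrightarrow> add_count (merge_steps p q) r = add_count p r"
  unfolding merge_steps_def by (induction p q rule: list_induct2) auto

lemma set_merge_steps:
  "st \<in> set (merge_steps p q) \<Longrightarrow> \<exists>a\<in>set p. \<exists>b\<in>set q. st = (fst b, snd a)"
  unfolding merge_steps_def by (force dest: set_zip_leftD set_zip_rightD)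

lemma phi_eq_map_merge_steps: "phi p q = map (\<lambda>(i, j). (i - 1, j - 1)) (merge_steps p q)"
  unfolding phi_def merge_steps_def by (simp add: case_prod_beta)

lemma rem_count_map_lower:
  "\<forall>st\<in>set w. fst st \<noteq> 0 \<Longrightarrow> rem_count (map (\<lambda>(i, j). (i - 1, j - 1)) w) r = rem_count w (Suc r)"
  by (induction w) auto

lemma phi_swap_steps:
  assumes "length p = length q" "1 \<le> k" "k < length p"
  shows "phi (swap_steps k p) (swap_steps k q) = swap_steps k (phi p q)"
  unfolding phi_def swap_steps_def
  by (rule nth_equalityI) (use assms in \<open>auto simp: nth_list_update\<close>)

definition lift_additions :: "(nat \<times> nat) list \<Rightarrow> (nat \<times> nat) list" where
  "lift_additions u = map (\<lambda>(i, j). (0, Suc j)) u"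

definition lift_removals :: "(nat \<times> nat) list \<Rightarrow> (nat \<times> nat) list" where
  "lift_removals u = map (\<lambda>(i, j). (Suc i, 0)) u"

lemma counts_lift_removals:
  "rem_count (lift_removals u) (Suc r) = rem_count u r" "rem_count (lift_removals u) 0 = 0"
  "r \<noteq> 0 \<Longrightarrow> add_count (lift_removals u) r = 0" "add_count (lift_removals u) 0 = length u"
  by (induction u) (auto simp: lift_removals_def)

lemma counts_lift_additions:
  "add_count (lift_additions u) (Suc r) = add_count u r" "add_count (lift_additions u) 0 = 0"
  "r \<noteq> 0 \<Longrightarrow> rem_count (lift_additions u) r = 0"
  by (induction u) (auto simp: lift_additions_def)

lemma phi_lift: "phi (lift_additions u) (lift_removals u) = u"
  unfolding phi_def lift_additions_def lift_removals_def by (induction u) auto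

lemma lift_phi:
  assumes "length p = length q"
    "\<forall>st\<in>set p. fst st = 0 \<and> snd st \<noteq> 0" "\<forall>st\<in>set q. fst st \<noteq> 0 \<and> snd st = 0"
  shows "lift_additions (phi p q) = p" "lift_removals (phi p q) = q"
  using assms unfolding phi_def lift_additions_def lift_removals_def
  by (induction p q rule: list_induct2) auto

section \<open>The walks through a middle shape\<close>

context
  fixes la nu :: partition and s n :: nat
  assumes co_Pieri: "co_Pieri la nu s"
    and n_large: "psize la + psize nu + s + la 1 + nu 1 \<le> n"
begin

abbreviation (input) "la_n \<equiv> shift_part n la"
abbreviation (input) "nu_n \<equiv> shift_part n nu"
abbreviation (input) "middle_shapes \<equiv>
  {al. is_partition al \<and> psize al = n - s \<and> psubseteq al (pinter la_n nu_n)}"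

lemma is_partition_la: "is_partition la" and is_partition_nu: "is_partition nu" and s_pos: "1 \<le> s"
  using co_Pieri unfolding co_Pieri_def by auto

lemma is_partition_la_n: "is_partition la_n" and psize_la_n: "psize la_n = n"
  using n_large
  by (simp_all add: is_partition_shift_part[OF is_partition_la]
      psize_shift_part[OF is_partition_la])

lemma is_partition_nu_n: "is_partition nu_n" and psize_nu_n: "psize nu_n = n"
  using n_large
  by (simp_all add: is_partition_shift_part[OF is_partition_nu]
      psize_shift_part[OF is_partition_nu])

lemma shifted_box_condition:
  assumes "s \<noteq> 1" "\<forall>r. al r \<le> la_n r" "\<forall>r. al r \<le> nu_n r"
    "psize la \<le> psize (tail_part al) + s" "psize nu \<le> psize (tail_part al) + s" "la 1 + nu 1 \<le> al 1"
  shows "\<forall>r\<ge>1. la_n (Suc r) + nu_n (Suc r) - al (Suc r) \<le> al r"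
proof (intro allI impI)
  fix r :: nat assume r: "r \<ge> 1"
  show "la_n (Suc r) + nu_n (Suc r) - al (Suc r) \<le> al r"
  proof (cases "r = 1")
    case True
    then show ?thesis using assms(6) by (simp add: shift_part_rows)
  next
    case False
    then obtain i where i: "r = Suc i" "i \<ge> 1" using r by (cases r) auto
    have "tail_part al k \<le> la k" "tail_part al k \<le> nu k" for k
      using assms(2)[rule_format, of "Suc k"] assms(3)[rule_format, of "Suc k"]
      by (auto simp: tail_part_def shift_part_rows)
    then have "la (Suc i) + nu (Suc i) \<le> tail_part al i + tail_part al (Suc i)"
      using co_Pieri_rows_bound[OF co_Pieri assms(1) _ _ assms(4,5) i(2)] by blast
    then show ?thesis using i by (simp add: tail_part_def shift_part_rows)
  qed
qed

lemma walks_through_shape: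
  assumes box: "\<forall>r\<ge>1. la_n (Suc r) + nu_n (Suc r) - al (Suc r) \<le> al r" and al0: "al 0 = 0"
    and rows: "\<forall>r\<ge>1. la_n r = al r + rem_count q r \<and> nu_n r = al r + add_count p r \<and>
      rem_count p r = 0 \<and> add_count q r = 0"
  shows "valid_walk al p nu_n" "valid_walk la_n q al"
    "length p = length q \<Longrightarrow> valid_walk la_n (merge_steps p q) nu_n"
proof -
  have fin: "finite {r. la_n r + nu_n r - al r \<noteq> 0}"
    by (rule finite_subset[OF _ finite_UnI[OF finite_support[OF is_partition_la_n]
      finite_support[OF is_partition_nu_n]]]) auto
  note walk = valid_walk_between[OF box fin]
  show "valid_walk al p nu_n" by (rule walk) (use al0 rows in \<open>simp_all add: shift_part_rows\<close>)
  show "valid_walk la_n q al" by (rule walk) (use al0 rows in \<open>simp_all add: shift_part_rows\<close>)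
  show "valid_walk la_n (merge_steps p q) nu_n" if "length p = length q"
    by (rule walk) (use rows in \<open>simp_all add: shift_part_rows rem_count_merge_steps[OF that]
      add_count_merge_steps[OF that]\<close>)
qed

lemma middle_shape_bounds:
  assumes "al \<in> middle_shapes"
  shows "al 0 = 0" "\<forall>r. al r \<le> la_n r" "\<forall>r. al r \<le> nu_n r"
    "psize la \<le> psize (tail_part al) + s" "psize nu \<le> psize (tail_part al) + s" "la 1 + nu 1 \<le> al 1"
proof -
  have part: "is_partition al" and size: "psize al = n - s"
    and sub: "\<forall>r. al r \<le> la_n r \<and> al r \<le> nu_n r"
    using assms by (auto simp: psubseteq_def pinter_def)
  show al0: "al 0 = 0" using part by (simp add: is_partition_def)
  show "\<forall>r. al r \<le> la_n r" "\<forall>r. al r \<le> nu_n r" using sub by auto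
  have "psize al = al 1 + psize (tail_part al)"
    by (rule psize_tail_part[OF al0 finite_support[OF part]])
  moreover have "al 1 \<le> n - psize la" "al 1 \<le> n - psize nu"
    using sub[rule_format, of 1] by (simp_all add: shift_part_def)
  moreover have "\<forall>r. tail_part al r \<le> la r"
  proof
    fix r
    show "tail_part al r \<le> la r"
      using sub[rule_format, of "Suc r"] by (auto simp: tail_part_def shift_part_def)
  qed
  then have "psize (tail_part al) \<le> psize la"
    using finite_support[OF is_partition_la] by (rule psize_mono)
  ultimately show "psize la \<le> psize (tail_part al) + s" "psize nu \<le> psize (tail_part al) + s"
    "la 1 + nu 1 \<le> al 1"
    using size n_large by linarith+
qed

lemma Std_to_nu_n_steps:
  assumes "al \<in> middle_shapes" "p \<in> Std s al nu_n"
  shows "\<forall>st\<in>set p. fst st = 0 \<and> snd st \<noteq> 0"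
proof -
  have len: "length p = s" and walk: "valid_walk al p nu_n" using assms(2)
    by (simp_all add: Std_def)
  have "psize nu_n + add_count p 0 = psize al + rem_count p 0"
    using assms(1) valid_walk_psize walk by blast
  then have "rem_count p 0 = length p" "add_count p 0 = 0"
    using assms(1) psize_nu_n rem_count_le_length[of p 0] len n_large by auto
  then show ?thesis by (simp add: rem_count_eq_length_iff add_count_eq_0_iff)
qed

lemma Std_from_la_n_steps:
  assumes "al \<in> middle_shapes" "q \<in> Std s la_n al"
  shows "\<forall>st\<in>set q. fst st \<noteq> 0 \<and> snd st = 0"
proof -
  have len: "length q = s" and walk: "valid_walk la_n q al" using assms(2)
    by (simp_all add: Std_def)
  have "psize al + add_count q 0 = psize la_n + rem_count q 0"
    using is_partition_la_n valid_walk_psize walk by blast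
  then have "add_count q 0 = length q" "rem_count q 0 = 0"
    using assms(1) psize_la_n add_count_le_length[of q 0] len n_large by auto
  then show ?thesis by (simp add: add_count_eq_length_iff rem_count_eq_0_iff)
qed

lemma middle_shape_rows:
  assumes "al \<in> middle_shapes" "p \<in> Std s al nu_n" "q \<in> Std s la_n al"
  shows "\<forall>r\<ge>1. la_n r = al r + rem_count q r \<and> nu_n r = al r + add_count p r \<and>
    rem_count p r = 0 \<and> add_count q r = 0"
proof (intro allI impI)
  fix r :: nat assume "r \<ge> 1"
  then have "rem_count p r = 0" "add_count q r = 0"
    using Std_to_nu_n_steps[OF assms(1,2)] Std_from_la_n_steps[OF assms(1,3)]
    by (auto simp: rem_count_eq_0_iff add_count_eq_0_iff)
  moreover have "valid_walk al p nu_n" "valid_walk la_n q al" using assms(2,3)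
    by (simp_all add: Std_def)
  ultimately show "la_n r = al r + rem_count q r \<and> nu_n r = al r + add_count p r \<and>
    rem_count p r = 0 \<and> add_count q r = 0"
    using valid_walk_row_balance \<open>r \<ge> 1\<close> by (metis add_0_right not_one_le_zero)
qed

lemma middle_merge_walk:
  assumes "al \<in> middle_shapes" "p \<in> Std s al nu_n" "q \<in> Std s la_n al"
  shows "valid_walk la_n (merge_steps p q) nu_n"
proof (cases "s = 1")
  case True
  then obtain a b where "p = [a]" "q = [b]"
    using assms(2,3) by (auto simp: Std_def length_Suc_conv)
  moreover obtain i j where "a = (0, j)" "b = (i, 0)"
    using Std_to_nu_n_steps[OF assms(1,2)] Std_from_la_n_steps[OF assms(1,3)] calculation
    by (metis list.set_intros(1) prod.collapse)
  ultimately show ?thesis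
    using valid_walk_merge_single[of al j nu_n la_n i] assms(2,3) is_partition_nu_n
    by (simp add: Std_def merge_steps_def)
next
  case False
  note bounds = middle_shape_bounds[OF assms(1)]
  show ?thesis
    using walks_through_shape(3)[OF shifted_box_condition[OF False bounds(2-6)] bounds(1)
      middle_shape_rows[OF assms]] assms(2,3)
    by (simp add: Std_def)
qed

lemma phi_in_StdPlus:
  assumes "al \<in> middle_shapes" "p \<in> Std s al nu_n" "q \<in> Std s la_n al"
  shows "phi p q \<in> StdPlus s la nu"
proof -
  have len: "length p = s" "length q = s" using assms(2,3) by (simp_all add: Std_def)
  have steps: "\<forall>st\<in>set (merge_steps p q). fst st \<noteq> 0 \<and> snd st \<noteq> 0"
    using Std_to_nu_n_steps[OF assms(1,2)] Std_from_la_n_steps[OF assms(1,3)]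
    by (fastforce dest: set_merge_steps)
  have "valid_walk la (phi p q) nu"
    using valid_walk_tail_part[OF middle_merge_walk[OF assms] steps] is_partition_la is_partition_nu
    by (simp add: phi_eq_map_merge_steps tail_part_shift_part is_partition_def)
  moreover have "rem_count (phi p q) i \<le> la i" if "i \<ge> 1" for i
  proof -
    have "rem_count (phi p q) i = rem_count (merge_steps p q) (Suc i)"
      unfolding phi_eq_map_merge_steps by (rule rem_count_map_lower) (use steps in blast)
    also have "\<dots> = rem_count q (Suc i)" using len by (simp add: rem_count_merge_steps)
    also have "\<dots> \<le> la_n (Suc i)" using middle_shape_rows[OF assms] by simp
    finally show ?thesis using that by (simp add: shift_part_rows)
  qed
  ultimately show ?thesis
    using len is_partition_la by (simp add: StdPlus_def Std_def phi_def rem_count_def)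
qed

lemma swap_steps_in_Std:
  assumes "al \<in> middle_shapes" "p \<in> Std s al nu_n" "q \<in> Std s la_n al" "1 \<le> k" "k \<le> s - 1"
  shows "swap_steps k p \<in> Std s al nu_n" "swap_steps k q \<in> Std s la_n al"
proof -
  have len: "length p = s" "length q = s" using assms(2,3) by (simp_all add: Std_def)
  then have k: "k < length p" "k < length q" using assms(4,5) by simp_all
  note bounds = middle_shape_bounds[OF assms(1)]
  have box: "\<forall>r\<ge>1. la_n (Suc r) + nu_n (Suc r) - al (Suc r) \<le> al r"
    using assms(4,5) by (intro shifted_box_condition bounds(2-6)) simp
  note walks = walks_through_shape[OF box bounds(1), of "swap_steps k q" "swap_steps k p"]
  have "valid_walk al (swap_steps k p) nu_n" "valid_walk la_n (swap_steps k q) al"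
    using middle_shape_rows[OF assms(1-3)]
    by (auto intro!: walks
        simp: counts_swap_steps[OF assms(4) k(1)] counts_swap_steps[OF assms(4) k(2)])
  then show "swap_steps k p \<in> Std s al nu_n" "swap_steps k q \<in> Std s la_n al"
    using assms(1) len is_partition_la_n by (simp_all add: Std_def swap_steps_def)
qed

lemma phi_inj:
  assumes "al \<in> middle_shapes" "p \<in> Std s al nu_n" "q \<in> Std s la_n al"
    "al' \<in> middle_shapes" "p' \<in> Std s al' nu_n" "q' \<in> Std s la_n al'"
    "phi p q = phi p' q'"
  shows "al = al'" "p = p'" "q = q'"
proof -
  have "length p = length q" "length p' = length q'" using assms by (simp_all add: Std_def)
  note lift =
    lift_phi[OF this(1) Std_to_nu_n_steps[OF assms(1,2)] Std_from_la_n_steps[OF assms(1,3)]]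
    lift_phi[OF this(2) Std_to_nu_n_steps[OF assms(4,5)] Std_from_la_n_steps[OF assms(4,6)]]
  show "p = p'" "q = q'" using lift assms(7) by metis+
  then show "al = al'" using assms(3,6) valid_walk_unique by (auto simp: Std_def)
qed

context
  fixes u :: "(nat \<times> nat) list"
  assumes u: "u \<in> StdPlus s la nu"
begin

definition lifted_shape :: partition where
  "lifted_shape = (\<lambda>r. if r = 0 then 0 else la_n r - rem_count (lift_removals u) r)"

lemma length_u: "length u = s" and walk_u: "valid_walk la u nu"
  and rem_count_u: "\<forall>i\<ge>1. rem_count u i \<le> la i"
  using u by (simp_all add: StdPlus_def Std_def rem_count_def)

lemma lifted_shape_rows:
  "\<forall>r\<ge>1. la_n r = lifted_shape r + rem_count (lift_removals u) r \<and>
    nu_n r = lifted_shape r + add_count (lift_additions u) r \<and>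
    rem_count (lift_additions u) r = 0 \<and> add_count (lift_removals u) r = 0"
proof (intro allI impI conjI)
  fix r :: nat assume "r \<ge> 1"
  then obtain i where r: "r = Suc i" by (cases r) auto
  have size_u: "psize nu + add_count u 0 = psize la + rem_count u 0"
    by (rule valid_walk_psize[OF is_partition_la walk_u])
  have u0: "rem_count u 0 \<le> s" "add_count u 0 \<le> s"
    using rem_count_le_length add_count_le_length length_u by metis+
  show "la_n r = lifted_shape r + rem_count (lift_removals u) r"
  proof (cases "i = 0")
    case True
    then show ?thesis using r u0 n_large
      by (simp add: lifted_shape_def counts_lift_removals shift_part_def)
  next
    case False
    then show ?thesis using r rem_count_u
      by (simp add: lifted_shape_def counts_lift_removals shift_part_rows)
  qed
  show "nu_n r = lifted_shape r + add_count (lift_additions u) r"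
  proof (cases "i = 0")
    case True
    then show ?thesis using r u0 n_large size_u
      by (simp add: lifted_shape_def counts_lift_removals counts_lift_additions shift_part_def)
  next
    case False
    then show ?thesis using r rem_count_u valid_walk_row_balance[OF walk_u, of i]
      by (simp add: lifted_shape_def counts_lift_removals counts_lift_additions shift_part_rows)
  qed
  show "rem_count (lift_additions u) r = 0" "add_count (lift_removals u) r = 0"
    using r by (simp_all add: counts_lift_removals counts_lift_additions)
qed

lemma lifted_shape_bounds:
  "lifted_shape 0 = 0" "\<forall>r. lifted_shape r \<le> la_n r" "\<forall>r. lifted_shape r \<le> nu_n r"
  "psize la \<le> psize (tail_part lifted_shape) + s" "psize nu \<le> psize (tail_part lifted_shape) + s"
  "la 1 + nu 1 \<le> lifted_shape 1"
proof -
  note rows = lifted_shape_rows[rule_format]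
  show "lifted_shape 0 = 0" by (simp add: lifted_shape_def)
  show "\<forall>r. lifted_shape r \<le> la_n r" by (simp add: lifted_shape_def)
  show "\<forall>r. lifted_shape r \<le> nu_n r"
  proof
    fix r
    show "lifted_shape r \<le> nu_n r"
      using rows[of r] by (cases "r = 0") (simp_all add: lifted_shape_def)
  qed
  have tail: "la r = tail_part lifted_shape r + rem_count u r"
    "nu r = tail_part lifted_shape r + add_count u r" if "r \<ge> 1" for r
    using rows[of "Suc r"] that by (simp_all add: tail_part_def shift_part_rows counts_lift_removals
      counts_lift_additions)
  have la_nu0: "la 0 = 0" "nu 0 = 0"
    using is_partition_la is_partition_nu by (simp_all add: is_partition_def)
  have la_bounds: "tail_part lifted_shape r \<le> la r \<and>
      la r \<le> tail_part lifted_shape r + rem_count u r"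
    and nu_bounds: "tail_part lifted_shape r \<le> nu r \<and>
      nu r \<le> tail_part lifted_shape r + add_count u r"
    for r using tail[of r] la_nu0 by (cases "r = 0"; simp add: tail_part_def)+
  have "psize la \<le> psize (tail_part lifted_shape) + sum (rem_count u) {r. la r \<noteq> 0}"
    using psize_le_psize_add_sum[of "tail_part lifted_shape" la "rem_count u"] la_bounds
      finite_support[OF is_partition_la] by blast
  moreover have "psize nu \<le> psize (tail_part lifted_shape) + sum (add_count u) {r. nu r \<noteq> 0}"
    using psize_le_psize_add_sum[of "tail_part lifted_shape" nu "add_count u"] nu_bounds
      finite_support[OF is_partition_nu] by blast
  moreover have "sum (rem_count u) {r. la r \<noteq> 0} \<le> s"
    using sum_length_filter_eq_le_length[OF finite_support[OF is_partition_la], of fst u] length_u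
    by (simp add: rem_count_def)
  moreover have "sum (add_count u) {r. nu r \<noteq> 0} \<le> s"
    using sum_length_filter_eq_le_length[OF finite_support[OF is_partition_nu], of snd u] length_u
    by (simp add: add_count_def)
  ultimately show "psize la \<le> psize (tail_part lifted_shape) + s"
    "psize nu \<le> psize (tail_part lifted_shape) + s" by linarith+
  have "rem_count u 0 \<le> s" using rem_count_le_length length_u by metis
  then show "la 1 + nu 1 \<le> lifted_shape 1"
    using n_large by (simp add: lifted_shape_def shift_part_def counts_lift_removals)
qed

lemma lifted_walks_single:
  assumes "s = 1"
  shows "valid_walk la_n (lift_removals u) lifted_shape"
    "valid_walk lifted_shape (lift_additions u) nu_n"
proof -
  obtain i j where u1: "u = [(i, j)]"
    using length_u assms by (auto simp: length_Suc_conv)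
  note rows = lifted_shape_rows[rule_format]
  note bounds = lifted_shape_bounds
  have shape: "lifted_shape = rem_box la_n (Suc i)"
  proof
    fix r show "lifted_shape r = rem_box la_n (Suc i) r"
      using rows[of r] bounds(1) u1
      by (cases "r = 0") (auto simp: rem_box_apply lift_removals_def shift_part_rows)
  qed
  have "is_partition (rem_box la i)" using walk_u u1 by simp
  moreover have "lifted_shape 2 \<le> lifted_shape 1"
    using bounds(2)[rule_format, of 2] bounds(6) by (simp add: numeral_2_eq_2 shift_part_rows)
  ultimately have part: "is_partition lifted_shape"
    using is_partition_if_tail_part[of lifted_shape, OF bounds(1)] shape
    by (simp add: tail_part_rem_box tail_part_shift_part is_partition_la[unfolded is_partition_def])
  have "la_n (Suc i) = lifted_shape (Suc i) + 1"
    using rows[of "Suc i"] u1 by (simp add: lift_removals_def)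
  then show "valid_walk la_n (lift_removals u) lifted_shape"
    using part shape u1 by (simp add: lift_removals_def)
  have "add_box lifted_shape (Suc j) = nu_n"
  proof
    fix r show "add_box lifted_shape (Suc j) r = nu_n r"
      using rows[of r] bounds(1) u1
      by (cases "r = 0") (auto simp: add_box_apply lift_additions_def shift_part_rows)
  qed
  then show "valid_walk lifted_shape (lift_additions u) nu_n"
    using part is_partition_nu_n u1 by (simp add: lift_additions_def)
qed

lemma lifted_walks:
  "valid_walk la_n (lift_removals u) lifted_shape" "valid_walk lifted_shape (lift_additions u) nu_n"
proof -
  have "valid_walk la_n (lift_removals u) lifted_shape \<and>
      valid_walk lifted_shape (lift_additions u) nu_n"
  proof (cases "s = 1")
    case False
    note bounds = lifted_shape_bounds
    show ?thesis
      using walks_through_shape[OF shifted_box_condition[OF False bounds(2-6)] bounds(1)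
        lifted_shape_rows] by blast
  qed (use lifted_walks_single in blast)
  then show "valid_walk la_n (lift_removals u) lifted_shape"
    "valid_walk lifted_shape (lift_additions u) nu_n" by simp_all
qed

lemma lifted_shape_in_middle_shapes: "lifted_shape \<in> middle_shapes"
proof -
  have len: "length (lift_removals u) = s" using length_u by (simp add: lift_removals_def)
  have "lift_removals u \<noteq> []" using len s_pos by auto
  then have part: "is_partition lifted_shape"
    by (rule valid_walk_target_is_partition[OF lifted_walks(1)])
  have "psize lifted_shape + add_count (lift_removals u) 0
      = psize la_n + rem_count (lift_removals u) 0"
    by (rule valid_walk_psize[OF is_partition_la_n lifted_walks(1)])
  then have "psize lifted_shape = n - s"
    using psize_la_n length_u by (simp add: counts_lift_removals)
  with part show ?thesis
    using lifted_shape_bounds(2,3) by (simp add: psubseteq_def pinter_def)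
qed

end

lemma StdPlus_in_phi_image:
  assumes "u \<in> StdPlus s la nu"
  shows "\<exists>al p q. al \<in> middle_shapes \<and> p \<in> Std s al nu_n \<and> q \<in> Std s la_n al \<and> phi p q = u"
proof (intro exI conjI)
  show "lifted_shape u \<in> middle_shapes" by (rule lifted_shape_in_middle_shapes[OF assms])
  then show "lift_additions u \<in> Std s (lifted_shape u) nu_n"
    "lift_removals u \<in> Std s la_n (lifted_shape u)"
    using lifted_walks[OF assms] length_u[OF assms] is_partition_la_n
    by (simp_all add: Std_def lift_additions_def lift_removals_def)
  show "phi (lift_additions u) (lift_removals u) = u" by (rule phi_lift)
qed

lemma swap_steps_phi:
  assumes "al \<in> middle_shapes" "p \<in> Std s al nu_n" "q \<in> Std s la_n al" "1 \<le> k" "k \<le> s - 1"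
  shows "phi (swap_steps k p) (swap_steps k q) = swap_steps k (phi p q)"
    "swap_steps k (phi p q) \<in> StdPlus s la nu"
proof -
  show eq: "phi (swap_steps k p) (swap_steps k q) = swap_steps k (phi p q)"
    using assms by (intro phi_swap_steps) (auto simp: Std_def)
  show "swap_steps k (phi p q) \<in> StdPlus s la nu"
    using phi_in_StdPlus[OF assms(1) swap_steps_in_Std[OF assms]] unfolding eq .
qed

lemma bij_betw_phi:
  "bij_betw (\<lambda>(al, p, q). phi p q) (SIGMA al:middle_shapes. Std s al nu_n \<times> Std s la_n al)
    (StdPlus s la nu)"
proof (rule bij_betwI')
  fix x y assume "x \<in> (SIGMA al:middle_shapes. Std s al nu_n \<times> Std s la_n al)"
    "y \<in> (SIGMA al:middle_shapes. Std s al nu_n \<times> Std s la_n al)"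
  then show "(case x of (al, p, q) \<Rightarrow> phi p q) = (case y of (al, p, q) \<Rightarrow> phi p q) \<longleftrightarrow> x = y"
    using phi_inj by (cases x; cases y) auto
next
  fix x assume "x \<in> (SIGMA al:middle_shapes. Std s al nu_n \<times> Std s la_n al)"
  then show "(case x of (al, p, q) \<Rightarrow> phi p q) \<in> StdPlus s la nu"
    using phi_in_StdPlus by (cases x) auto
next
  fix u assume "u \<in> StdPlus s la nu"
  then show "\<exists>x\<in>SIGMA al:middle_shapes. Std s al nu_n \<times> Std s la_n al.
      u = (case x of (al, p, q) \<Rightarrow> phi p q)"
    using StdPlus_in_phi_image by force
qed

lemma shifted_bijection:
  "let A = middle_shapes; D = (SIGMA al:A. Std s al nu_n \<times> Std s la_n al) in
    (\<forall>al\<in>A. \<forall>p\<in>Std s al nu_n. \<forall>l<s. fst (p ! l) = 0 \<and> 1 \<le> snd (p ! l)) \<and>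
    (\<forall>al\<in>A. \<forall>q\<in>Std s la_n al. \<forall>l<s. 1 \<le> fst (q ! l) \<and> snd (q ! l) = 0) \<and>
    bij_betw (\<lambda>(al, p, q). phi p q) D (StdPlus s la nu) \<and>
    (\<forall>(al, p, q)\<in>D. \<forall>k. 1 \<le> k \<and> k \<le> s - 1 \<longrightarrow>
        swap_steps k p \<in> Std s al nu_n \<and> swap_steps k q \<in> Std s la_n al \<and>
        phi (swap_steps k p) (swap_steps k q) = swap_steps k (phi p q) \<and>
        swap_steps k (phi p q) \<in> StdPlus s la nu) \<and>
    (\<forall>u\<in>StdZero s la nu. \<forall>k. 1 \<le> k \<and> k \<le> s - 1 \<longrightarrow> swap_steps k u \<in> Std s la nu)"
proof -
  have "\<forall>u\<in>StdZero s la nu. \<forall>k. 1 \<le> k \<and> k \<le> s - 1 \<longrightarrow> swap_steps k u \<in> Std s la nu"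
    using StdPlus_in_phi_image swap_steps_phi(2) by (fastforce simp: StdZero_def StdPlus_def)
  then show ?thesis
    using bij_betw_phi Std_to_nu_n_steps Std_from_la_n_steps swap_steps_in_Std swap_steps_phi
    by (simp add: Let_def) (fastforce simp: Std_def Suc_le_eq)
qed

end

theorem lemma4p20:
  fixes la nu :: partition and s :: nat
  assumes "co_Pieri la nu s"
  shows "\<exists>N. \<forall>n\<ge>N.
    (let A = {al. is_partition al \<and> psize al = n - s \<and>
                  psubseteq al (pinter (shift_part n la) (shift_part n nu))};
         D = (SIGMA al:A. Std s al (shift_part n nu) \<times> Std s (shift_part n la) al)
     in
      (\<forall>al\<in>A. \<forall>p\<in>Std s al (shift_part n nu). \<forall>l<s. fst (p ! l) = 0 \<and> 1 \<le> snd (p ! l)) \<and>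
      (\<forall>al\<in>A. \<forall>q\<in>Std s (shift_part n la) al. \<forall>l<s. 1 \<le> fst (q ! l) \<and> snd (q ! l) = 0) \<and>
      bij_betw (\<lambda>(al, p, q). phi p q) D (StdPlus s la nu) \<and>
      (\<forall>(al, p, q)\<in>D. \<forall>k. 1 \<le> k \<and> k \<le> s - 1 \<longrightarrow>
          swap_steps k p \<in> Std s al (shift_part n nu) \<and>
          swap_steps k q \<in> Std s (shift_part n la) al \<and>
          phi (swap_steps k p) (swap_steps k q) = swap_steps k (phi p q) \<and>
          swap_steps k (phi p q) \<in> StdPlus s la nu) \<and>
      (\<forall>u\<in>StdZero s la nu. \<forall>k. 1 \<le> k \<and> k \<le> s - 1 \<longrightarrow>
          swap_steps k u \<in> Std s la nu))"
  using shifted_bijection[OF assms] by blast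

end
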